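(* Let $\mathcal{K}$ be a set of compact, orthogonally convex subsets of $\mathbb{R}^n$ that contains every singleton $\{x\}$ and satisfies $X+I\in\mathcal{K}$ whenever $X\in\mathcal{K}$ and $I$ is a compact interval. Then every monotone translation-invariant valuation on $\mathcal{K}$ is continuous with respect to the Hausdorff metric.
   Context: A subset $X\subseteq\mathbb{R}^n$ is orthogonally convex if $X\cap L$ is convex for every straight line $L$ parallel to a coordinate axis. An interval in $\mathbb{R}^n$ is a product of intervals in $\mathbb{R}$; $+$ is Minkowski sum. A valuation on $\mathcal{K}$ is a function $\phi\colon\mathcal{K}\to\mathbb{R}$ with $\phi(\emptyset)=0$ and $\phi(X\cup Y)=\phi(X)+\phi(Y)-\phi(X\cap Y)$ whenever $X,Y,X\cup Y,X\cap Y\in\mathcal{K}$. It is increasing if $X\subseteq Y$ implies $\phi(X)\le\phi(Y)$, monotone if $\phi$ or $-\phi$ is increasing, and translation-invariant if $\phi(X+a)=\phi(X)$ for all $X\in\mathcal{K}$, $a\in\mathbb{R}^n$. The Hausdorff distance between compact $X,Y$ is $\inf\{\delta>0: X\subseteq Y+\delta B_n,\ Y\subseteq X+\delta B_n\}$ with $B_n$ the closed unit ball of the $\ell_1$ norm (any norm gives the same notion of continuity). *)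

theory Defs
  imports "HOL-Analysis.Analysis"
begin

definition orth_convex :: "'a::euclidean_space set \<Rightarrow> bool" where
  "orth_convex X \<longleftrightarrow> (\<forall>b\<in>Basis. \<forall>p. convex (X \<inter> {p + t *\<^sub>R b | t. True}))"

definition msum :: "'a::euclidean_space set \<Rightarrow> 'a set \<Rightarrow> 'a set" where
  "msum X Y = {x + y | x y. x \<in> X \<and> y \<in> Y}"

definition valuation_on :: "'a set set \<Rightarrow> ('a set \<Rightarrow> real) \<Rightarrow> bool" where
  "valuation_on K \<phi> \<longleftrightarrow> \<phi> {} = 0 \<and>
     (\<forall>X Y. X \<in> K \<longrightarrow> Y \<in> K \<longrightarrow> X \<union> Y \<in> K \<longrightarrow> X \<inter> Y \<in> K \<longrightarrow>
        \<phi> (X \<union> Y) = \<phi> X + \<phi> Y - \<phi> (X \<inter> Y))"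

definition increasing_on :: "'a set set \<Rightarrow> ('a set \<Rightarrow> real) \<Rightarrow> bool" where
  "increasing_on K \<phi> \<longleftrightarrow> (\<forall>X\<in>K. \<forall>Y\<in>K. X \<subseteq> Y \<longrightarrow> \<phi> X \<le> \<phi> Y)"

definition monotone_val_on :: "'a set set \<Rightarrow> ('a set \<Rightarrow> real) \<Rightarrow> bool" where
  "monotone_val_on K \<phi> \<longleftrightarrow> increasing_on K \<phi> \<or> increasing_on K (\<lambda>X. - \<phi> X)"

definition translation_invariant_on :: "'a::euclidean_space set set \<Rightarrow> ('a set \<Rightarrow> real) \<Rightarrow> bool" where
  "translation_invariant_on K \<phi> \<longleftrightarrow> (\<forall>X\<in>K. \<forall>a. \<phi> ((\<lambda>x. x + a) ` X) = \<phi> X)"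

definition l1_cball :: "real \<Rightarrow> 'a::euclidean_space set" where
  "l1_cball r = {x. (\<Sum>b\<in>Basis. \<bar>x \<bullet> b\<bar>) \<le> r}"

definition hausdorff_dist :: "'a::euclidean_space set \<Rightarrow> 'a set \<Rightarrow> real" where
  "hausdorff_dist X Y = Inf {\<delta>. \<delta> > 0 \<and> X \<subseteq> msum Y (l1_cball \<delta>) \<and> Y \<subseteq> msum X (l1_cball \<delta>)}"

definition hausdorff_continuous_on :: "'a::euclidean_space set set \<Rightarrow> ('a set \<Rightarrow> real) \<Rightarrow> bool" where
  "hausdorff_continuous_on K \<phi> \<longleftrightarrow>
     (\<forall>X\<in>K. X \<noteq> {} \<longrightarrow> (\<forall>e>0. \<exists>d>0. \<forall>Y\<in>K. Y \<noteq> {} \<longrightarrow> hausdorff_dist X Y < d \<longrightarrow> \<bar>\<phi> Y - \<phi> X\<bar> < e))"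

end

theory Submission
  imports Defs
begin

text \<open>For \<open>Z \<in> K\<close> and a coordinate direction \<open>b\<close>, the gain \<open>s \<mapsto> \<phi> (Z + [0, s b]) - \<phi> Z\<close> is
  additive in \<open>s \<ge> 0\<close>: the segment sum for \<open>s + t\<close> is the union of the one for \<open>s\<close> and a
  translate of the one for \<open>t\<close>, and by orthogonal convexity the two meet in a translate of \<open>Z\<close>.
  An additive monotone gain is at most \<open>1 / N\<close> times its value at \<open>1\<close> on \<open>[0, 1 / N]\<close>, so
  thickening \<open>Y\<close> by a cube of side \<open>1 / N\<close>, one coordinate at a time, raises \<open>\<phi>\<close> by
  \<open>O(1 / N)\<close>, with a constant that is uniform for all \<open>Y\<close> near a fixed \<open>X\<close>. Sets at small
  Hausdorff distance lie in small cube thickenings of each other, which gives continuity;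
  decreasing valuations are handled through \<open>-\<phi>\<close>.\<close>

lemma msum_eq_set_plus: "msum A B = A + B"
  unfolding msum_def set_plus_def by blast

lemma msum_mono: "A \<subseteq> A' \<Longrightarrow> B \<subseteq> B' \<Longrightarrow> msum A B \<subseteq> msum A' B'"
  unfolding msum_eq_set_plus by (rule set_plus_mono2)

lemma msum_assoc: "msum (msum A B) C = msum A (msum B C)"
  unfolding msum_eq_set_plus by (rule add.assoc)

lemma msum_Un_right: "msum A (B \<union> C) = msum A B \<union> msum A C"
  unfolding msum_eq_set_plus by (rule set_plus_Un)

lemma subset_msum: "0 \<in> B \<Longrightarrow> A \<subseteq> msum A B"
  unfolding msum_def by force

lemma msum_singleton: "msum A {c} = (\<lambda>x. x + c) ` A"
  unfolding msum_def by auto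

lemma msum_zero [simp]: "msum A {0} = A"
  by (simp add: msum_singleton)

lemma msum_translation: "msum A ((+) c ` B) = (\<lambda>x. x + c) ` msum A B"
  unfolding msum_def by (auto simp: image_iff algebra_simps) (metis, blast)

lemma msum_cbox_translation: "msum A (cbox (c + a) (c + b)) = (\<lambda>x. x + c) ` msum A (cbox a b)"
  by (simp add: cbox_translation msum_translation)

lemma msum_cbox_cbox:
  fixes a b c d :: "'a::euclidean_space"
  assumes "cbox a b \<noteq> {}" "cbox c d \<noteq> {}"
  shows "msum (cbox a b) (cbox c d) = cbox (a + c) (b + d)"
proof (intro set_eqI iffI)
  fix x assume "x \<in> msum (cbox a b) (cbox c d)"
  then show "x \<in> cbox (a + c) (b + d)"
    unfolding msum_def by (fastforce simp: mem_box inner_add_left intro: add_mono)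
next
  fix x assume x: "x \<in> cbox (a + c) (b + d)"
  have ab: "\<And>i. i \<in> Basis \<Longrightarrow> a \<bullet> i \<le> b \<bullet> i" and cd: "\<And>i. i \<in> Basis \<Longrightarrow> c \<bullet> i \<le> d \<bullet> i"
    using assms by (auto simp: box_ne_empty)
  \<comment> \<open>choose each coordinate of the first summand as small as the second summand allows\<close>
  define y where "y = (\<Sum>i\<in>Basis. max (a \<bullet> i) (x \<bullet> i - d \<bullet> i) *\<^sub>R i)"
  have y: "y \<bullet> i = max (a \<bullet> i) (x \<bullet> i - d \<bullet> i)" if "i \<in> Basis" for i
    using that by (simp add: y_def inner_sum_left inner_Basis if_distrib cong: if_cong)
  have "a \<bullet> i \<le> y \<bullet> i \<and> y \<bullet> i \<le> b \<bullet> i \<and> c \<bullet> i \<le> (x - y) \<bullet> i \<and> (x - y) \<bullet> i \<le> d \<bullet> i"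
    if "i \<in> Basis" for i
    using x that ab[OF that] cd[OF that] by (auto simp: mem_box y inner_diff_left inner_add_left)
  then have "y \<in> cbox a b" "x - y \<in> cbox c d"
    by (simp_all add: mem_box)
  moreover have "x = y + (x - y)" by simp
  ultimately show "x \<in> msum (cbox a b) (cbox c d)"
    unfolding msum_def by blast
qed

lemma inner_sum_subset_Basis:
  fixes F :: "'a::euclidean_space set"
  assumes "F \<subseteq> Basis" "i \<in> Basis"
  shows "(\<Sum>F) \<bullet> i = (if i \<in> F then 1 else 0)"
proof -
  have "(\<Sum>F) \<bullet> i = (\<Sum>b\<in>F. if b = i then 1 else 0)"
    using assms by (auto simp: inner_sum_left inner_Basis intro!: sum.cong)
  also have "\<dots> = (if i \<in> F then 1 else 0)"
    using finite_subset[OF assms(1)] by simp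
  finally show ?thesis .
qed

lemma zero_mem_cbox_scaleR_sum:
  fixes F :: "'a::euclidean_space set"
  assumes "F \<subseteq> Basis" "0 \<le> c"
  shows "0 \<in> cbox 0 (c *\<^sub>R \<Sum>F)"
  using assms inner_sum_subset_Basis[OF assms(1)] by (auto simp: mem_box)

lemma cbox_0_scaleR_sum_nonempty:
  fixes F :: "'a::euclidean_space set"
  shows "F \<subseteq> Basis \<Longrightarrow> 0 \<le> c \<Longrightarrow> cbox 0 (c *\<^sub>R \<Sum>F) \<noteq> {}"
  using zero_mem_cbox_scaleR_sum by blast

lemma cbox_0_scaleR_sum_insert:
  fixes b :: "'a::euclidean_space"
  assumes "b \<in> Basis" "b \<notin> F" "F \<subseteq> Basis" "0 \<le> c"
  shows "cbox 0 (c *\<^sub>R \<Sum>(insert b F)) = msum (cbox 0 (c *\<^sub>R \<Sum>F)) (cbox 0 (c *\<^sub>R b))"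
proof -
  have "c *\<^sub>R \<Sum>(insert b F) = c *\<^sub>R \<Sum>F + c *\<^sub>R b"
    using assms finite_subset[OF assms(3)] by (simp add: algebra_simps)
  moreover have "cbox 0 (c *\<^sub>R b) \<noteq> {}"
    using cbox_0_scaleR_sum_nonempty[of "{b}" c] assms by simp
  ultimately show ?thesis
    using assms by (simp add: msum_cbox_cbox cbox_0_scaleR_sum_nonempty)
qed

lemma cbox_scaleR_Basis:
  fixes b :: "'a::euclidean_space"
  assumes b: "b \<in> Basis"
  shows "cbox (\<alpha> *\<^sub>R b) (\<beta> *\<^sub>R b) = (\<lambda>u. u *\<^sub>R b) ` {\<alpha>..\<beta>}"
proof (intro set_eqI iffI)
  fix x assume x: "x \<in> cbox (\<alpha> *\<^sub>R b) (\<beta> *\<^sub>R b)"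
  have c: "\<alpha> * (b \<bullet> i) \<le> x \<bullet> i \<and> x \<bullet> i \<le> \<beta> * (b \<bullet> i)" if "i \<in> Basis" for i
    using x that by (simp add: mem_box)
  have "x = (x \<bullet> b) *\<^sub>R b"
  proof (rule euclidean_eqI)
    fix i :: 'a assume i: "i \<in> Basis"
    show "x \<bullet> i = ((x \<bullet> b) *\<^sub>R b) \<bullet> i"
      using c[OF i] b i by (cases "i = b") (auto simp: inner_Basis)
  qed
  moreover have "x \<bullet> b \<in> {\<alpha>..\<beta>}" using c[OF b] b by simp
  ultimately show "x \<in> (\<lambda>u. u *\<^sub>R b) ` {\<alpha>..\<beta>}" by blast
next
  fix x assume "x \<in> (\<lambda>u. u *\<^sub>R b) ` {\<alpha>..\<beta>}"
  then show "x \<in> cbox (\<alpha> *\<^sub>R b) (\<beta> *\<^sub>R b)"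
    using b by (auto simp: mem_box inner_Basis)
qed

lemma mem_msum_segment:
  fixes b :: "'a::euclidean_space"
  assumes "b \<in> Basis"
  shows "x \<in> msum Z (cbox (\<alpha> *\<^sub>R b) (\<beta> *\<^sub>R b)) \<longleftrightarrow> (\<exists>z\<in>Z. \<exists>u\<in>{\<alpha>..\<beta>}. x = z + u *\<^sub>R b)"
  unfolding msum_def cbox_scaleR_Basis[OF assms] by blast

lemma orth_convex_segment:
  fixes b :: "'a::euclidean_space"
  assumes b: "b \<in> Basis" and Z: "orth_convex Z" and z: "z \<in> Z" "z + c *\<^sub>R b \<in> Z"
    and u: "u \<in> closed_segment 0 c"
  shows "z + u *\<^sub>R b \<in> Z"
proof -
  let ?L = "{z + t *\<^sub>R b | t. True}"
  have "closed_segment z (z + c *\<^sub>R b) \<subseteq> Z \<inter> ?L"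
    using Z b z unfolding orth_convex_def
    by (intro closed_segment_subset) (auto intro: exI[of _ 0])
  moreover have "z + u *\<^sub>R b \<in> closed_segment z (z + c *\<^sub>R b)"
    using u by (auto simp: closed_segment_def algebra_simps)
  ultimately show ?thesis by blast
qed

lemma msum_segment_Un:
  fixes b :: "'a::euclidean_space"
  assumes b: "b \<in> Basis" and "0 \<le> s" "0 \<le> t"
  shows "msum Z (cbox 0 (s *\<^sub>R b)) \<union> msum Z (cbox (s *\<^sub>R b) ((s + t) *\<^sub>R b))
    = msum Z (cbox 0 ((s + t) *\<^sub>R b))"
proof -
  have "{0..s} \<union> {s..s + t} = {0..s + t}" using assms by auto
  then have "cbox 0 (s *\<^sub>R b) \<union> cbox (s *\<^sub>R b) ((s + t) *\<^sub>R b) = cbox 0 ((s + t) *\<^sub>R b)"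
    using cbox_scaleR_Basis[OF b, of 0] cbox_scaleR_Basis[OF b, of s]
    by (metis image_Un scale_zero_left)
  then show ?thesis by (metis msum_Un_right)
qed

lemma msum_segment_Int:
  fixes b :: "'a::euclidean_space"
  assumes b: "b \<in> Basis" and Z: "orth_convex Z" and "0 \<le> s" "0 \<le> t"
  shows "msum Z (cbox 0 (s *\<^sub>R b)) \<inter> msum Z (cbox (s *\<^sub>R b) ((s + t) *\<^sub>R b))
    = (\<lambda>x. x + s *\<^sub>R b) ` Z"
proof (intro set_eqI iffI)
  fix x assume "x \<in> msum Z (cbox 0 (s *\<^sub>R b)) \<inter> msum Z (cbox (s *\<^sub>R b) ((s + t) *\<^sub>R b))"
  then obtain z1 u1 z2 u2 where h: "z1 \<in> Z" "u1 \<in> {0..s}" "x = z1 + u1 *\<^sub>R b"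
     "z2 \<in> Z" "u2 \<in> {s..s + t}" "x = z2 + u2 *\<^sub>R b"
    using mem_msum_segment[OF b, of _ Z 0] mem_msum_segment[OF b] by (metis IntE scale_zero_left)
  \<comment> \<open>\<open>z1\<close> and \<open>z2\<close> lie on a line parallel to \<open>b\<close>, and \<open>u1 \<le> s \<le> u2\<close> puts
    \<open>z1 + (u1 - s) *\<^sub>R b\<close> between them\<close>
  have "z1 + (u1 - u2) *\<^sub>R b = z2"
    using h(3,6) by (metis add_diff_cancel_right' add_diff_eq scaleR_diff_left)
  then have "z1 + (u1 - u2) *\<^sub>R b \<in> Z" using h(4) by simp
  then have "z1 + (u1 - s) *\<^sub>R b \<in> Z"
    using orth_convex_segment[OF b Z h(1)] h by (auto simp: closed_segment_eq_real_ivl)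
  moreover have "x = (z1 + (u1 - s) *\<^sub>R b) + s *\<^sub>R b" using h by (simp add: algebra_simps)
  ultimately show "x \<in> (\<lambda>x. x + s *\<^sub>R b) ` Z" by blast
next
  fix x assume "x \<in> (\<lambda>x. x + s *\<^sub>R b) ` Z"
  then obtain z where z: "z \<in> Z" "x = z + s *\<^sub>R b" by blast
  have "x \<in> msum Z (cbox (0 *\<^sub>R b) (s *\<^sub>R b))" "x \<in> msum Z (cbox (s *\<^sub>R b) ((s + t) *\<^sub>R b))"
    unfolding mem_msum_segment[OF b] using z assms by (auto intro!: bexI[of _ s])
  then show "x \<in> msum Z (cbox 0 (s *\<^sub>R b)) \<inter> msum Z (cbox (s *\<^sub>R b) ((s + t) *\<^sub>R b))"
    by simp
qed

lemma l1_cball_mono: "\<delta> \<le> \<delta>' \<Longrightarrow> l1_cball \<delta> \<subseteq> l1_cball \<delta>'"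
  unfolding l1_cball_def by auto

lemma l1_cball_subset_cbox: "l1_cball \<delta> \<subseteq> cbox (- (\<delta> *\<^sub>R One)) (\<delta> *\<^sub>R One)"
proof
  fix x :: 'a assume "x \<in> l1_cball \<delta>"
  then have x: "(\<Sum>b\<in>Basis. \<bar>x \<bullet> b\<bar>) \<le> \<delta>" unfolding l1_cball_def by simp
  have "\<bar>x \<bullet> i\<bar> \<le> \<delta>" if "i \<in> Basis" for i
    using member_le_sum[of i Basis "\<lambda>b. \<bar>x \<bullet> b\<bar>"] that x by simp
  then show "x \<in> cbox (- (\<delta> *\<^sub>R One)) (\<delta> *\<^sub>R One)"
    by (force simp: mem_box abs_le_iff)
qed

lemma subset_msum_l1_cball:
  fixes X Y :: "'a::euclidean_space set"
  assumes "bounded X" "bounded Y" "Y \<noteq> {}"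
  shows "\<exists>\<delta>>0. X \<subseteq> msum Y (l1_cball \<delta>)"
proof -
  obtain B where B: "\<And>x. x \<in> X \<union> Y \<Longrightarrow> norm x \<le> B"
    using assms bounded_Un bounded_iff by metis
  obtain y where y: "y \<in> Y" using assms by blast
  define \<delta> where "\<delta> = real DIM('a) * (2 * B) + 1"
  have "0 \<le> B" using B[of y] y by (meson UnI2 norm_ge_zero order_trans)
  then have "\<delta> > 0" unfolding \<delta>_def by (simp add: add_nonneg_pos)
  moreover have "X \<subseteq> msum Y (l1_cball \<delta>)"
  proof
    fix x assume x: "x \<in> X"
    have "(\<Sum>b\<in>Basis. \<bar>(x - y) \<bullet> b\<bar>) \<le> (\<Sum>b\<in>(Basis::'a set). norm (x - y))"
      by (intro sum_mono Basis_le_norm)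
    also have "\<dots> = real DIM('a) * norm (x - y)" by simp
    also have "\<dots> \<le> real DIM('a) * (2 * B)"
      using norm_triangle_ineq4[of x y] B[of x] B[of y] x y by (intro mult_left_mono) auto
    finally have "x - y \<in> l1_cball \<delta>" unfolding l1_cball_def \<delta>_def by simp
    moreover have "x = y + (x - y)" by simp
    ultimately show "x \<in> msum Y (l1_cball \<delta>)" unfolding msum_def using y by blast
  qed
  ultimately show ?thesis by blast
qed

lemma hausdorff_dist_less_imp_subset:
  fixes X Y :: "'a::euclidean_space set"
  assumes "bounded X" "X \<noteq> {}" "bounded Y" "Y \<noteq> {}" "hausdorff_dist X Y < d"
  shows "\<exists>\<delta>>0. \<delta> < d \<and> X \<subseteq> msum Y (l1_cball \<delta>) \<and> Y \<subseteq> msum X (l1_cball \<delta>)"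
proof -
  let ?S = "{\<delta>. \<delta> > 0 \<and> X \<subseteq> msum Y (l1_cball \<delta>) \<and> Y \<subseteq> msum X (l1_cball \<delta>)}"
  obtain d1 where d1: "d1 > 0" "X \<subseteq> msum Y (l1_cball d1)"
    using subset_msum_l1_cball[OF assms(1,3,4)] by blast
  obtain d2 where d2: "d2 > 0" "Y \<subseteq> msum X (l1_cball d2)"
    using subset_msum_l1_cball[OF assms(3,1,2)] by blast
  have "X \<subseteq> msum Y (l1_cball (max d1 d2))" "Y \<subseteq> msum X (l1_cball (max d1 d2))"
    using d1(2) d2(2) msum_mono[OF order_refl l1_cball_mono]
    by (meson max.cobounded1 max.cobounded2 order_trans)+
  then have "max d1 d2 \<in> ?S" using d1(1) by simp
  then have "\<exists>\<delta>\<in>?S. \<delta> < d"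
    using assms(5) unfolding hausdorff_dist_def by (intro cInf_lessD) auto
  then show ?thesis by blast
qed

locale increasing_translation_invariant_valuation =
  fixes K :: "'a::euclidean_space set set" and \<phi> :: "'a set \<Rightarrow> real"
  assumes orth_convex: "X \<in> K \<Longrightarrow> orth_convex X"
    and singleton_in: "{x} \<in> K"
    and msum_cbox_in: "X \<in> K \<Longrightarrow> cbox a b \<noteq> {} \<Longrightarrow> msum X (cbox a b) \<in> K"
    and valuation: "valuation_on K \<phi>"
    and increasing: "increasing_on K \<phi>"
    and translation_invariant: "translation_invariant_on K \<phi>"
begin

lemma phi_mono: "X \<in> K \<Longrightarrow> Y \<in> K \<Longrightarrow> X \<subseteq> Y \<Longrightarrow> \<phi> X \<le> \<phi> Y"
  using increasing unfolding increasing_on_def by blast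

lemma phi_translation: "X \<in> K \<Longrightarrow> \<phi> ((\<lambda>x. x + a) ` X) = \<phi> X"
  using translation_invariant unfolding translation_invariant_on_def by blast

lemma phi_Un:
  "X \<in> K \<Longrightarrow> Y \<in> K \<Longrightarrow> X \<union> Y \<in> K \<Longrightarrow> X \<inter> Y \<in> K \<Longrightarrow> \<phi> (X \<union> Y) = \<phi> X + \<phi> Y - \<phi> (X \<inter> Y)"
  using valuation unfolding valuation_on_def by blast

lemma phi_singleton_le:
  assumes "Z \<in> K" "y \<in> Z"
  shows "\<phi> {0} \<le> \<phi> Z"
proof -
  have "\<phi> {0} = \<phi> {y}"
    using phi_translation[of "{0}" y] singleton_in by simp
  also have "\<dots> \<le> \<phi> Z"
    using assms by (intro phi_mono singleton_in) auto
  finally show ?thesis .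
qed

lemma msum_segment_in:
  fixes b :: 'a
  shows "Z \<in> K \<Longrightarrow> b \<in> Basis \<Longrightarrow> \<alpha> \<le> \<beta> \<Longrightarrow> msum Z (cbox (\<alpha> *\<^sub>R b) (\<beta> *\<^sub>R b)) \<in> K"
  by (intro msum_cbox_in) (simp_all add: cbox_scaleR_Basis)

definition segment_gain :: "'a set \<Rightarrow> 'a \<Rightarrow> real \<Rightarrow> real" where
  "segment_gain Z b s = \<phi> (msum Z (cbox 0 (s *\<^sub>R b))) - \<phi> Z"

lemma segment_gain_add:
  assumes Z: "Z \<in> K" and b: "b \<in> Basis" and s: "0 \<le> s" and t: "0 \<le> t"
  shows "segment_gain Z b (s + t) = segment_gain Z b s + segment_gain Z b t"
proof -
  let ?A = "msum Z (cbox 0 (s *\<^sub>R b))" and ?B = "msum Z (cbox (s *\<^sub>R b) ((s + t) *\<^sub>R b))"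
  have in_K: "msum Z (cbox 0 (r *\<^sub>R b)) \<in> K" if "0 \<le> r" for r
    using msum_segment_in[OF Z b that] by simp
  have "?B = (\<lambda>x. x + s *\<^sub>R b) ` msum Z (cbox 0 (t *\<^sub>R b))"
    using msum_cbox_translation[of Z "s *\<^sub>R b" 0 "t *\<^sub>R b"] by (simp add: algebra_simps)
  then have "\<phi> ?B = \<phi> (msum Z (cbox 0 (t *\<^sub>R b)))"
    using phi_translation in_K t by simp
  moreover have "\<phi> (?A \<inter> ?B) = \<phi> Z"
    unfolding msum_segment_Int[OF b orth_convex[OF Z] s t] using phi_translation Z by simp
  moreover have "\<phi> (?A \<union> ?B) = \<phi> ?A + \<phi> ?B - \<phi> (?A \<inter> ?B)"
  proof (rule phi_Un)
    show "?A \<in> K" "?B \<in> K" using in_K msum_segment_in[OF Z b] s t by simp_all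
    show "?A \<union> ?B \<in> K" unfolding msum_segment_Un[OF b s t] using in_K s t by simp
    have "?A \<inter> ?B = msum Z (cbox (s *\<^sub>R b) (s *\<^sub>R b))"
      unfolding msum_segment_Int[OF b orth_convex[OF Z] s t] by (simp add: msum_singleton)
    then show "?A \<inter> ?B \<in> K" using msum_segment_in[OF Z b order_refl] by simp
  qed
  ultimately show ?thesis
    unfolding segment_gain_def msum_segment_Un[OF b s t] by simp
qed

lemma segment_gain_of_nat_mult:
  assumes "Z \<in> K" "b \<in> Basis" "0 \<le> s"
  shows "segment_gain Z b (real k * s) = real k * segment_gain Z b s"
proof (induction k)
  case 0
  show ?case by (simp add: segment_gain_def)
next
  case (Suc k)
  have "segment_gain Z b (real (Suc k) * s) = segment_gain Z b (real k * s + s)"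
    by (simp add: algebra_simps)
  also have "\<dots> = segment_gain Z b (real k * s) + segment_gain Z b s"
    using assms by (intro segment_gain_add) auto
  finally show ?case using Suc by (simp add: algebra_simps)
qed

lemma segment_gain_le:
  assumes Z: "Z \<in> K" and b: "b \<in> Basis" and N: "0 < N" and t: "0 \<le> t" "t \<le> 1 / real N"
  shows "segment_gain Z b t \<le> segment_gain Z b 1 / real N"
proof -
  have "cbox 0 (t *\<^sub>R b) \<subseteq> cbox 0 ((1 / real N) *\<^sub>R b)"
    using cbox_scaleR_Basis[OF b, of 0] t by auto
  then have "segment_gain Z b t \<le> segment_gain Z b (1 / real N)"
    unfolding segment_gain_def using t msum_segment_in[OF Z b, of 0]
    by (auto intro!: phi_mono msum_mono[OF order_refl])
  also have "real N * segment_gain Z b (1 / real N) = segment_gain Z b 1"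
    using segment_gain_of_nat_mult[OF Z b, of "1 / real N" N] N by simp
  then have "segment_gain Z b (1 / real N) = segment_gain Z b 1 / real N"
    using N by (simp add: field_simps)
  finally show ?thesis .
qed

lemma phi_msum_short_segment_le:
  assumes Z: "Z \<in> K" "Z \<noteq> {}" and W: "W \<in> K" "msum Z (cbox 0 b) \<subseteq> W"
    and b: "b \<in> Basis" and N: "0 < N" and \<delta>: "0 \<le> \<delta>" "\<delta> \<le> 1 / real N"
  shows "\<phi> (msum Z (cbox 0 (\<delta> *\<^sub>R b))) - \<phi> Z \<le> (\<phi> W - \<phi> {0}) / real N"
proof -
  have "\<phi> (msum Z (cbox 0 b)) \<le> \<phi> W"
    using msum_segment_in[OF Z(1) b, of 0 1] W by (intro phi_mono) auto
  moreover have "\<phi> {0} \<le> \<phi> Z" using phi_singleton_le[OF Z(1)] Z(2) by blast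
  ultimately have "segment_gain Z b 1 \<le> \<phi> W - \<phi> {0}"
    unfolding segment_gain_def by simp
  then have "segment_gain Z b 1 / real N \<le> (\<phi> W - \<phi> {0}) / real N"
    using N by (simp add: divide_right_mono)
  then show ?thesis
    using segment_gain_le[OF Z(1) b N \<delta>] unfolding segment_gain_def by simp
qed

lemma phi_msum_cube_le:
  assumes Y: "Y \<in> K" "Y \<noteq> {}" and N: "0 < N" and \<delta>: "0 \<le> \<delta>" "\<delta> \<le> 1 / real N"
    and F: "F \<subseteq> Basis"
  shows "\<phi> (msum Y (cbox 0 (\<delta> *\<^sub>R \<Sum>F))) - \<phi> Y
    \<le> real (card F) * (\<phi> (msum Y (cbox 0 (2 *\<^sub>R One))) - \<phi> {0}) / real N"
  using finite_subset[OF F finite_Basis] F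
proof (induction F rule: finite_induct)
  case empty
  then show ?case by simp
next
  case (insert b F)
  let ?W = "msum Y (cbox 0 (2 *\<^sub>R One))"
  define Z where "Z = msum Y (cbox 0 (\<delta> *\<^sub>R \<Sum>F))"
  have b: "b \<in> Basis" and F: "F \<subseteq> Basis" using insert.prems by auto
  have Z: "Z \<in> K" "Z \<noteq> {}"
    unfolding Z_def using msum_cbox_in[OF Y(1) cbox_0_scaleR_sum_nonempty[OF F \<delta>(1)]]
      subset_msum[OF zero_mem_cbox_scaleR_sum[OF F \<delta>(1)], of Y] Y(2) by auto
  have b_ne: "cbox 0 b \<noteq> {}" using cbox_0_scaleR_sum_nonempty[of "{b}" 1] b by simp
  have "msum Z (cbox 0 b) = msum Y (cbox 0 (\<delta> *\<^sub>R \<Sum>F + b))"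
    unfolding Z_def msum_assoc using b_ne
    by (simp add: msum_cbox_cbox cbox_0_scaleR_sum_nonempty[OF F \<delta>(1)])
  also have "\<dots> \<subseteq> ?W"
  proof -
    have "1 / real N \<le> 1" using N by simp
    then have "cbox 0 (\<delta> *\<^sub>R \<Sum>F + b) \<subseteq> cbox 0 (2 *\<^sub>R One)"
      using F b \<delta> by (intro subset_box_imp) (simp add: inner_add_left inner_sum_subset_Basis inner_Basis)
    then show ?thesis by (simp add: msum_mono)
  qed
  finally have "\<phi> (msum Z (cbox 0 (\<delta> *\<^sub>R b))) - \<phi> Z \<le> (\<phi> ?W - \<phi> {0}) / real N"
    using Y(1) cbox_0_scaleR_sum_nonempty[of Basis 2]
    by (intro phi_msum_short_segment_le[OF Z _ _ b N \<delta>] msum_cbox_in) auto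
  moreover have "\<phi> Z - \<phi> Y \<le> real (card F) * (\<phi> ?W - \<phi> {0}) / real N"
    using insert.IH[OF F] unfolding Z_def .
  moreover have "real (card (insert b F)) * (\<phi> ?W - \<phi> {0}) / real N
      = real (card F) * (\<phi> ?W - \<phi> {0}) / real N + (\<phi> ?W - \<phi> {0}) / real N"
    using insert.hyps by (simp add: distrib_right add_divide_distrib)
  moreover have "msum Y (cbox 0 (\<delta> *\<^sub>R \<Sum>(insert b F))) = msum Z (cbox 0 (\<delta> *\<^sub>R b))"
    unfolding Z_def cbox_0_scaleR_sum_insert[OF b insert.hyps(2) F \<delta>(1)] by (simp add: msum_assoc)
  ultimately show ?case by simp
qed

lemma phi_le_of_subset_msum_cube:
  assumes A: "A \<in> K" and B: "B \<in> K" "B \<noteq> {}" and X: "X \<in> K" and N: "0 < N"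
    and \<delta>: "0 \<le> \<delta>" "2 * \<delta> \<le> 1 / real N"
    and AB: "A \<subseteq> msum B (cbox (- (\<delta> *\<^sub>R One)) (\<delta> *\<^sub>R One))"
    and BX: "B \<subseteq> msum X (cbox (- One) One)"
  shows "\<phi> A - \<phi> B \<le> real DIM('a) * (\<phi> (msum X (cbox (- One) (3 *\<^sub>R One))) - \<phi> {0}) / real N"
proof -
  let ?C = "msum B (cbox 0 ((2 * \<delta>) *\<^sub>R One))" and ?W = "msum X (cbox (- One) (3 *\<^sub>R One))"
  have C: "?C \<in> K"
    using msum_cbox_in[OF B(1) cbox_0_scaleR_sum_nonempty[of Basis "2 * \<delta>"]] \<delta> by simp
  have "- (\<delta> *\<^sub>R One) + (2 * \<delta>) *\<^sub>R One = \<delta> *\<^sub>R (One :: 'a)"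
    by (simp add: algebra_simps flip: scaleR_left_distrib)
  then have translate: "msum B (cbox (- (\<delta> *\<^sub>R One)) (\<delta> *\<^sub>R One)) = (\<lambda>x. x + - (\<delta> *\<^sub>R One)) ` ?C"
    using msum_cbox_translation[of B "- (\<delta> *\<^sub>R One)" 0 "(2 * \<delta>) *\<^sub>R One"] by simp
  have "msum B (cbox (- (\<delta> *\<^sub>R One)) (\<delta> *\<^sub>R One)) \<in> K"
    using msum_cbox_in[OF B(1)] \<delta> by (simp add: box_ne_empty)
  then have "\<phi> A \<le> \<phi> (msum B (cbox (- (\<delta> *\<^sub>R One)) (\<delta> *\<^sub>R One)))"
    using phi_mono[OF A _ AB] by blast
  also have "\<dots> = \<phi> ?C"
    unfolding translate using phi_translation[OF C] .
  also have "\<dots> \<le> \<phi> B + real DIM('a) * (\<phi> (msum B (cbox 0 (2 *\<^sub>R One))) - \<phi> {0}) / real N"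
    using phi_msum_cube_le[OF B N _ \<delta>(2) order_refl] \<delta> by simp
  also have "\<dots> \<le> \<phi> B + real DIM('a) * (\<phi> ?W - \<phi> {0}) / real N"
  proof -
    have "msum B (cbox 0 (2 *\<^sub>R One)) \<subseteq> msum (msum X (cbox (- One) One)) (cbox 0 (2 *\<^sub>R One))"
      using BX by (rule msum_mono[OF _ order_refl])
    also have "\<dots> = ?W"
    proof -
      have "One + 2 *\<^sub>R One = 3 *\<^sub>R (One :: 'a)"
        using scaleR_left_distrib[of 1 2 "One :: 'a"] by simp
      then show ?thesis
        unfolding msum_assoc by (simp add: msum_cbox_cbox box_ne_empty)
    qed
    finally have "\<phi> (msum B (cbox 0 (2 *\<^sub>R One))) \<le> \<phi> ?W"
      using B(1) X cbox_0_scaleR_sum_nonempty[of Basis 2]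
      by (intro phi_mono msum_cbox_in) (auto simp: box_ne_empty)
    then show ?thesis using N by (simp add: divide_right_mono)
  qed
  finally show ?thesis by simp
qed

lemma hausdorff_continuous:
  assumes bounded: "\<And>X. X \<in> K \<Longrightarrow> bounded X"
  shows "hausdorff_continuous_on K \<phi>"
  unfolding hausdorff_continuous_on_def
proof (intro ballI impI allI)
  fix X e assume X: "X \<in> K" "X \<noteq> {}" and e: "(e :: real) > 0"
  define c where "c = real DIM('a) * (\<phi> (msum X (cbox (- One) (3 *\<^sub>R One))) - \<phi> {0})"
  obtain n :: nat where "c / e < real n" using reals_Archimedean2 by blast
  define N where "N = Suc n"
  then have N: "0 < N" and "c / e < real N" using \<open>c / e < real n\<close> by auto
  then have cN: "c / real N < e" using e by (simp add: field_simps)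
  show "\<exists>d>0. \<forall>Y\<in>K. Y \<noteq> {} \<longrightarrow> hausdorff_dist X Y < d \<longrightarrow> \<bar>\<phi> Y - \<phi> X\<bar> < e"
  proof (intro exI[of _ "1 / (2 * real N)"] conjI ballI impI)
    show "0 < 1 / (2 * real N)" using N by simp
    fix Y assume Y: "Y \<in> K" "Y \<noteq> {}" and "hausdorff_dist X Y < 1 / (2 * real N)"
    then obtain \<delta> where \<delta>: "\<delta> > 0" "\<delta> < 1 / (2 * real N)"
      and XY: "X \<subseteq> msum Y (l1_cball \<delta>)" and YX: "Y \<subseteq> msum X (l1_cball \<delta>)"
      using hausdorff_dist_less_imp_subset bounded X by metis
    have \<delta>N: "2 * \<delta> \<le> 1 / real N" using \<delta>(2) N by (simp add: field_simps)
    have "1 / (2 * real N) \<le> 1" using N by simp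
    then have "\<delta> \<le> 1" using \<delta>(2) by linarith
    have cube: "msum Z (l1_cball \<delta>) \<subseteq> msum Z (cbox (- (\<delta> *\<^sub>R One)) (\<delta> *\<^sub>R One))" for Z :: "'a set"
      by (intro msum_mono order_refl l1_cball_subset_cbox)
    have "cbox (- (\<delta> *\<^sub>R One)) (\<delta> *\<^sub>R One) \<subseteq> cbox (- One) (One :: 'a)"
      using \<open>\<delta> \<le> 1\<close> by (intro subset_box_imp) simp
    then have "Y \<subseteq> msum X (cbox (- One) One)"
      using YX cube[of X] msum_mono[OF order_refl] by blast
    then have "\<phi> X - \<phi> Y \<le> c / real N"
      using phi_le_of_subset_msum_cube[OF X(1) Y X(1) N _ \<delta>N] XY cube[of Y] \<delta>(1) unfolding c_def by auto
    moreover have "X \<subseteq> msum X (cbox (- One) One)"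
      by (rule subset_msum) (simp add: mem_box)
    then have "\<phi> Y - \<phi> X \<le> c / real N"
      using phi_le_of_subset_msum_cube[OF Y(1) X X(1) N _ \<delta>N] YX cube[of X] \<delta>(1) unfolding c_def by auto
    ultimately show "\<bar>\<phi> Y - \<phi> X\<bar> < e" using cN by linarith
  qed
qed

end

theorem theorem4p2:
  fixes K :: "'a::euclidean_space set set" and \<phi> :: "'a set \<Rightarrow> real"
  assumes K_compact: "\<forall>X\<in>K. compact X"
    and K_orth: "\<forall>X\<in>K. orth_convex X"
    and K_sing: "\<forall>x. {x} \<in> K"
    and K_sum: "\<forall>X\<in>K. \<forall>a b. cbox a b \<noteq> {} \<longrightarrow> msum X (cbox a b) \<in> K"
    and val: "valuation_on K \<phi>"
    and mono: "monotone_val_on K \<phi>"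
    and ti: "translation_invariant_on K \<phi>"
  shows "hausdorff_continuous_on K \<phi>"
proof -
  have bounded: "\<And>X. X \<in> K \<Longrightarrow> bounded X"
    using K_compact compact_imp_bounded by blast
  consider "increasing_on K \<phi>" | "increasing_on K (\<lambda>X. - \<phi> X)"
    using mono unfolding monotone_val_on_def by blast
  then show ?thesis
  proof cases
    case 1
    interpret increasing_translation_invariant_valuation K \<phi>
      using K_orth K_sing K_sum val 1 ti by unfold_locales auto
    show ?thesis using hausdorff_continuous bounded .
  next
    case 2
    interpret increasing_translation_invariant_valuation K "\<lambda>X. - \<phi> X"
      using K_orth K_sing K_sum val 2 ti
      by unfold_locales (auto simp: valuation_on_def translation_invariant_on_def)
    have "hausdorff_continuous_on K (\<lambda>X. - \<phi> X)" using hausdorff_continuous bounded .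
    then show ?thesis unfolding hausdorff_continuous_on_def by (simp add: abs_minus_commute)
  qed
qed

end
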